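(* Let $0<p<1/2$, let $c>0$ be a constant, and let $n$ be such that $k=c\log_2 n$ is an integer with $k\ge 2$. Let $s\in\{0,1\}^n$ be an arbitrary (unknown) source string, let $x\in\{0,1\}^k$, and let $i\in\{1,\dots,n-k+1\}$. Let $\epsilon_n>0$ and $\delta\in(0,1)$. (1) There is an estimator $\hat K_{s,x}[i]$, computed from $T$ independent traces of $s$, such that if $T\ge \ln\!\left(\frac{2}{\delta}\right)\epsilon_n^{-2} f_c(n)$ then $|\hat K_{s,x}[i]-K_{s,x}[i]|<\epsilon_n$ with probability at least $1-\delta$. (2) There is an estimator $\hat K_s$ of the whole $k$-mer density map, computed from $T$ independent traces of $s$, such that if $T\ge \ln\!\left(\frac{2n^{1+c}}{\delta}\right)\epsilon_n^{-2} f_c(n)$ then $\|\hat K_s-K_s\|_\infty<\epsilon_n$ with probability at least $1-\delta$.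
   Context: Deletion channel: for $s\in\{0,1\}^n$ and deletion probability $p\in[0,1)$, a trace $\tilde S$ of $s$ is the (possibly shorter) string obtained by deleting each bit of $s$ independently with probability $p$; distinct traces are independent. Strings are indexed from 1 and $s[a:b]=(s[a],\dots,s[b])$. For $x\in\{0,1\}^k$ and $i\in\{1,\dots,n-k+1\}$, the $k$-mer density is $K_{s,x}[i]=\sum_{j=1}^{n-k+1}\binom{j-1}{i-1}(1-p)^{i-1}p^{j-i}\,\mathbb 1\{s[j:j+k-1]=x\}$ (with $\binom{j-1}{i-1}=0$ if $j<i$). The $k$-mer density map $K_s$ is the vector obtained by concatenating $K_{s,x}$ over all $x\in\{0,1\}^k$, and $\|\cdot\|_\infty$ is the max of absolute values of entries. $H(q)=-q\log_2 q-(1-q)\log_2(1-q)$ is the binary entropy. Define $\alpha_c(p)=1+c\log_2\!\frac{1-p}{p}+\frac{cH\left(1-\frac{p}{1-p}\right)+c\log_2\frac{p}{1-p}}{1-\frac{p}{1-p}}$ and $f_c(n)=\frac{\left(1+2n^{\alpha_c(p)}\right)^2}{2\,n^{2c\log_2(1-p)-1}}$. *)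

theory Defs
  imports "HOL-Probability.Probability"
begin

(* Deletion channel: each bit deleted independently with probability p
   (bernoulli_pmf p yields True with probability p, meaning "delete"). *)
fun trace_pmf :: "real \<Rightarrow> bool list \<Rightarrow> bool list pmf" where
  "trace_pmf p [] = return_pmf []"
| "trace_pmf p (b # bs) =
     bernoulli_pmf p \<bind> (\<lambda>del. trace_pmf p bs \<bind> (\<lambda>t.
       return_pmf (if del then t else b # t)))"

fun traces_pmf :: "real \<Rightarrow> bool list \<Rightarrow> nat \<Rightarrow> bool list list pmf" where
  "traces_pmf p s 0 = return_pmf []"
| "traces_pmf p s (Suc T) =
     trace_pmf p s \<bind> (\<lambda>t. traces_pmf p s T \<bind> (\<lambda>ts. return_pmf (t # ts)))"

(* substring s[a:b] with 1-based indexing, here s[j : j+k-1] *)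
definition substr :: "bool list \<Rightarrow> nat \<Rightarrow> nat \<Rightarrow> bool list" where
  "substr s j k = take k (drop (j - 1) s)"

definition kmer_density :: "real \<Rightarrow> bool list \<Rightarrow> bool list \<Rightarrow> nat \<Rightarrow> real" where
  "kmer_density p s x i =
     (\<Sum>j = 1..length s + 1 - length x.
        real ((j - 1) choose (i - 1)) * (1 - p) ^ (i - 1) * p ^ (j - i) *
        (if substr s j (length x) = x then 1 else 0))"

definition bin_entropy :: "real \<Rightarrow> real" where
  "bin_entropy q = - q * log 2 q - (1 - q) * log 2 (1 - q)"

definition alpha_c :: "real \<Rightarrow> real \<Rightarrow> real" where
  "alpha_c c p = 1 + c * log 2 ((1 - p) / p)
     + (c * bin_entropy (1 - p / (1 - p)) + c * log 2 (p / (1 - p))) / (1 - p / (1 - p))"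

definition f_c :: "real \<Rightarrow> real \<Rightarrow> nat \<Rightarrow> real" where
  "f_c c p n = (1 + 2 * real n powr alpha_c c p) ^ 2
     / (2 * real n powr (2 * c * log 2 (1 - p) - 1))"

end

theory Submission
  imports Defs
begin

text \<open>From a single trace \<open>t\<close>, sum over the embeddings of \<open>x\<close> into \<open>t\<close> whose first symbol sits
  at position \<open>i\<close> the weight \<open>q\<^sup>g\<close>, where \<open>g\<close> counts the trace symbols skipped between matched
  ones and \<open>q = - p / (1 - p)\<close>, and divide by \<open>(1 - p)\<^sup>k\<close>. Conditioning on the fate of the first
  source symbol, a deleted symbol and a surviving but skipped one cancel in expectation
  (\<open>p + (1 - p) q = 0\<close>), so only occurrences of \<open>x\<close> as a block of \<open>s\<close> survive, each with the
  binomial weight of landing at position \<open>i\<close>: the statistic is an unbiased estimate of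
  \<open>K\<^sub>s\<^sub>,\<^sub>x[i]\<close>. It is bounded by \<open>(1 - 2p)\<^sup>-\<^sup>k\<close>, and \<open>f\<^sub>c(n) \<ge> 2 (1 - 2p)\<^sup>-\<^sup>2\<^sup>k\<close>, so Hoeffding's
  inequality for the empirical mean over \<open>T\<close> traces gives (1), and a union bound over the
  \<open>2\<^sup>k (n - k + 1) \<le> n\<^sup>1\<^sup>+\<^sup>c\<close> pairs \<open>(x, i)\<close> gives (2).\<close>

lemma set_pmf_trace_pmf: "set_pmf (trace_pmf p s) \<subseteq> {t. length t \<le> length s}"
  by (induction s) (auto simp: set_bind_pmf)

lemma finite_set_pmf_trace_pmf: "finite (set_pmf (trace_pmf p s))"
  using finite_lists_length_le[of "UNIV :: bool set" "length s"]
  by (intro finite_subset[OF set_pmf_trace_pmf]) simp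

lemma integrable_trace_pmf [simp]: "integrable (trace_pmf p s) (f :: bool list \<Rightarrow> real)"
  by (rule integrable_measure_pmf_finite[OF finite_set_pmf_trace_pmf])

lemma expectation_trace_pmf_Cons:
  fixes f :: "bool list \<Rightarrow> real"
  assumes "0 \<le> p" "p \<le> 1"
  shows "measure_pmf.expectation (trace_pmf p (a # s)) f =
           p * measure_pmf.expectation (trace_pmf p s) f
         + (1 - p) * measure_pmf.expectation (trace_pmf p s) (\<lambda>t. f (a # t))"
proof -
  have "trace_pmf p (a # s) =
          bernoulli_pmf p \<bind> (\<lambda>del. map_pmf (\<lambda>t. if del then t else a # t) (trace_pmf p s))"
    by (simp add: map_pmf_def)
  also have "measure_pmf.expectation \<dots> f =
      (\<Sum>del\<in>UNIV. pmf (bernoulli_pmf p) del *\<^sub>R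
         measure_pmf.expectation (map_pmf (\<lambda>t. if del then t else a # t) (trace_pmf p s)) f)"
    by (rule pmf_expectation_bind) (auto intro: finite_set_pmf_trace_pmf)
  finally show ?thesis
    using assms by (simp add: UNIV_bool)
qed

text \<open>Sum over the embeddings of \<open>y\<close> into \<open>t\<close> as a subsequence, each weighted by \<open>q\<^sup>g\<close> where \<open>g\<close> is
  the number of symbols of \<open>t\<close> skipped before the last matched one.\<close>
fun embed_weight :: "real \<Rightarrow> 'a list \<Rightarrow> 'a list \<Rightarrow> real" where
  "embed_weight q [] t = 1"
| "embed_weight q (b # y) [] = 0"
| "embed_weight q (b # y) (a # t) =
     (if a = b then embed_weight q y t else 0) + q * embed_weight q (b # y) t"

fun anchored_weight :: "real \<Rightarrow> 'a list \<Rightarrow> 'a list \<Rightarrow> real" where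
  "anchored_weight q (b # y) (a # t) = (if a = b then embed_weight q y t else 0)"
| "anchored_weight q _ _ = 0"

lemma abs_embed_weight_le:
  assumes "\<bar>q\<bar> < 1"
  shows "\<bar>embed_weight q y t\<bar> \<le> (1 / (1 - \<bar>q\<bar>)) ^ length y"
  using assms
proof (induction q y t rule: embed_weight.induct)
  case (3 q b y a t)
  define R where "R = 1 / (1 - \<bar>q\<bar>)"
  have "0 \<le> R" using "3.prems" by (simp add: R_def)
  then have "\<bar>if a = b then embed_weight q y t else 0\<bar> \<le> R ^ length y"
    using 3 by (auto simp: R_def)
  moreover have "\<bar>q * embed_weight q (b # y) t\<bar> \<le> \<bar>q\<bar> * R ^ Suc (length y)"
    unfolding abs_mult R_def using 3 by (intro mult_left_mono) simp_all
  ultimately have "\<bar>embed_weight q (b # y) (a # t)\<bar> \<le> R ^ length y + \<bar>q\<bar> * R ^ Suc (length y)"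
    by (smt (verit) embed_weight.simps(3) abs_triangle_ineq)
  also have "\<dots> = R ^ Suc (length y)"
    using "3.prems" by (simp add: R_def field_simps)
  finally show ?case by (simp add: R_def)
qed simp_all

lemma abs_anchored_weight_le:
  assumes "\<bar>q\<bar> < 1"
  shows "\<bar>anchored_weight q x t\<bar> \<le> (1 / (1 - \<bar>q\<bar>)) ^ length x"
proof (cases "(q, x, t)" rule: anchored_weight.cases)
  case (1 q' b y a t')
  have "\<bar>embed_weight q y t'\<bar> \<le> (1 / (1 - \<bar>q\<bar>)) ^ length y"
    by (rule abs_embed_weight_le[OF assms])
  also have "\<dots> \<le> (1 / (1 - \<bar>q\<bar>)) ^ length x"
    using 1 assms by (intro power_increasing) auto
  finally show ?thesis
    using 1 assms by (auto simp: less_imp_le)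
qed (use assms in \<open>auto simp: less_imp_le\<close>)

lemma expectation_embed_weight:
  assumes "0 \<le> p" "p \<le> 1" and q: "p + (1 - p) * q = 0"
  shows "measure_pmf.expectation (trace_pmf p s) (embed_weight q y)
       = (1 - p) ^ length y * (if take (length y) s = y then 1 else 0)"
proof (induction s arbitrary: y)
  case Nil
  then show ?case by (cases y) auto
next
  case (Cons a s)
  show ?case
  proof (cases y)
    case (Cons b y')
    have step: "measure_pmf.expectation (trace_pmf p s) (\<lambda>t. embed_weight q y (a # t))
        = (if a = b then measure_pmf.expectation (trace_pmf p s) (embed_weight q y') else 0)
        + q * measure_pmf.expectation (trace_pmf p s) (embed_weight q y)"
      using Cons by (cases "a = b") simp_all
    have "measure_pmf.expectation (trace_pmf p (a # s)) (embed_weight q y)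
        = (p + (1 - p) * q) * measure_pmf.expectation (trace_pmf p s) (embed_weight q y)
        + (1 - p) * (if a = b then measure_pmf.expectation (trace_pmf p s) (embed_weight q y') else 0)"
      unfolding expectation_trace_pmf_Cons[OF assms(1,2)] step by (simp add: algebra_simps)
    then show ?thesis
      using Cons.IH[of y'] Cons q by (simp del: trace_pmf.simps)
  qed (simp add: assms)
qed

text \<open>\<open>kmer_density p s x (i + 1)\<close> with 0-based start positions \<open>j\<close>, summed over all of \<open>s\<close>:
  a window running past the end of \<open>s\<close> is shorter than \<open>x\<close> and contributes 0.\<close>
definition kmer_density0 :: "real \<Rightarrow> 'a list \<Rightarrow> 'a list \<Rightarrow> nat \<Rightarrow> real" where
  "kmer_density0 p x s i = (\<Sum>j<length s. real (j choose i) * (1 - p) ^ i * p ^ (j - i) *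
        (if take (length x) (drop j s) = x then 1 else 0))"

lemma kmer_density0_Nil [simp]: "kmer_density0 p x [] i = 0"
  by (simp add: kmer_density0_def)

lemma kmer_density0_Cons:
  "kmer_density0 p x (a # s) i = p * kmer_density0 p x s i +
     (if i = 0 then (if take (length x) (a # s) = x then 1 else 0)
      else (1 - p) * kmer_density0 p x s (i - 1))"
proof -
  define ind where "ind j = (if take (length x) (drop j s) = x then 1 else (0::real))" for j
  have "kmer_density0 p x (a # s) i =
        real (0 choose i) * (1 - p) ^ i * p ^ (0 - i) * (if take (length x) (a # s) = x then 1 else 0)
      + (\<Sum>j<length s. real (Suc j choose i) * (1 - p) ^ i * p ^ (Suc j - i) * ind j)"
    unfolding kmer_density0_def ind_def by (simp only: length_Cons sum.lessThan_Suc_shift) simp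
  also have "\<dots> = p * kmer_density0 p x s i +
     (if i = 0 then (if take (length x) (a # s) = x then 1 else 0)
      else (1 - p) * kmer_density0 p x s (i - 1))"
  proof (cases i)
    case 0
    then show ?thesis by (simp add: kmer_density0_def ind_def sum_distrib_left algebra_simps)
  next
    case (Suc m)
    have Pascal: "real (Suc j choose i) * (1 - p) ^ i * p ^ (Suc j - i) * ind j
       = p * (real (j choose i) * (1 - p) ^ i * p ^ (j - i) * ind j)
       + (1 - p) * (real (j choose m) * (1 - p) ^ m * p ^ (j - m) * ind j)" for j
    proof (cases "i \<le> j")
      case True
      then have "p ^ (j - m) = p * p ^ (j - i)"
        using Suc by (metis Suc_diff_le diff_Suc_Suc power_Suc)
      then show ?thesis using Suc by (simp add: algebra_simps)
    next
      case False
      then have "j choose i = 0" by (simp add: binomial_eq_0)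
      then have "Suc j choose i = j choose m" using Suc by simp
      with \<open>j choose i = 0\<close> show ?thesis using Suc by (simp add: algebra_simps del: binomial_Suc_Suc)
    qed
    have "(\<Sum>j<length s. real (Suc j choose i) * (1 - p) ^ i * p ^ (Suc j - i) * ind j)
        = p * kmer_density0 p x s i + (1 - p) * kmer_density0 p x s m"
      by (simp only: kmer_density0_def ind_def[symmetric] Pascal sum.distrib sum_distrib_left)
    then show ?thesis using Suc by simp
  qed
  finally show ?thesis .
qed

lemma expectation_anchored_weight:
  assumes "0 \<le> p" "p \<le> 1" "p + (1 - p) * q = 0" and "x \<noteq> []"
  shows "measure_pmf.expectation (trace_pmf p s) (\<lambda>t. anchored_weight q x (drop i t))
       = (1 - p) ^ length x * kmer_density0 p x s i"
proof (induction s arbitrary: i)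
  case Nil
  then show ?case using assms(4) by (cases x) auto
next
  case (Cons a s)
  obtain b y where x: "x = b # y" using assms(4) by (cases x) auto
  have shift: "measure_pmf.expectation (trace_pmf p s) (\<lambda>t. anchored_weight q x (drop i (a # t)))
      = (if i = 0 then (1 - p) ^ length y * (if take (length x) (a # s) = x then 1 else 0)
         else (1 - p) ^ length x * kmer_density0 p x s (i - 1))"
    using Cons.IH[of "i - 1"] expectation_embed_weight[OF assms(1-3), of s y]
    by (cases i; cases "a = b") (auto simp: x)
  have "measure_pmf.expectation (trace_pmf p (a # s)) (\<lambda>t. anchored_weight q x (drop i t)) =
          p * measure_pmf.expectation (trace_pmf p s) (\<lambda>t. anchored_weight q x (drop i t))
        + (1 - p) * measure_pmf.expectation (trace_pmf p s) (\<lambda>t. anchored_weight q x (drop i (a # t)))"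
    using assms by (simp add: expectation_trace_pmf_Cons del: trace_pmf.simps)
  also have "\<dots> = (1 - p) ^ length x * kmer_density0 p x (a # s) i"
    unfolding shift Cons.IH[of i] by (simp add: kmer_density0_Cons x algebra_simps)
  finally show ?case .
qed

lemma kmer_density_eq_kmer_density0:
  assumes "1 \<le> i" "x \<noteq> []"
  shows "kmer_density p s x i = kmer_density0 p x s (i - 1)"
proof -
  define N where "N = length s + 1 - length x"
  define f where "f j = real (j choose (i - 1)) * (1 - p) ^ (i - 1) * p ^ (j - (i - 1)) *
        (if take (length x) (drop j s) = x then 1 else 0)" for j
  have "kmer_density p s x i = (\<Sum>j<N. f j)"
    unfolding kmer_density_def N_def f_def sum_bounds_lt_plus1[symmetric] substr_def
    using assms(1) by (intro sum.cong refl) (auto simp: Suc_diff_le)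
  also have "\<dots> = (\<Sum>j<length s. f j)"
  proof (rule sum.mono_neutral_left)
    show "{..<N} \<subseteq> {..<length s}" using assms(2) by (cases x) (auto simp: N_def)
    show "\<forall>j\<in>{..<length s} - {..<N}. f j = 0"
      using assms(2) by (auto simp: N_def f_def)
  qed simp
  also have "\<dots> = kmer_density0 p x s (i - 1)" unfolding kmer_density0_def f_def ..
  finally show ?thesis .
qed

lemma hoeffding_Pi_pmf_mean:
  fixes g :: "'a \<Rightarrow> real"
  assumes g: "\<And>t. \<bar>g t\<bar> \<le> B" and B: "B > 0" and T: "T > 0" and \<epsilon>: "\<epsilon> > 0"
  shows "measure_pmf.prob (Pi_pmf {..<T} d (\<lambda>_. M))
           {f. \<epsilon> \<le> \<bar>(\<Sum>i<T. g (f i)) / T - measure_pmf.expectation M g\<bar>}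
         \<le> 2 * exp (- real T * \<epsilon>\<^sup>2 / (2 * B\<^sup>2))"
proof -
  define P where "P = Pi_pmf {..<T} d (\<lambda>_. M)"
  define \<mu> where "\<mu> = (\<Sum>i<T. measure_pmf.expectation P (\<lambda>f. g (f i)))"
  have "measure_pmf.expectation P (\<lambda>f. g (f i)) = measure_pmf.expectation M g" if "i < T" for i
  proof -
    have "measure_pmf.expectation P (\<lambda>f. g (f i)) = measure_pmf.expectation (map_pmf (\<lambda>f. f i) P) g"
      by simp
    also have "map_pmf (\<lambda>f. f i) P = M"
      unfolding P_def using that by (simp add: Pi_pmf_component)
    finally show ?thesis .
  qed
  then have \<mu>_eq: "\<mu> = real T * measure_pmf.expectation M g"
    by (simp add: \<mu>_def)
  interpret Hoeffding_ineq P "{..<T}" "\<lambda>i f. g (f i)" "\<lambda>_. - B" "\<lambda>_. B" \<mu>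
  proof unfold_locales
    show "prob_space.indep_vars P (\<lambda>_. borel) (\<lambda>i f. g (f i)) {..<T}"
      unfolding P_def
      by (intro prob_space.indep_vars_compose2[OF _ indep_vars_Pi_pmf])
         (auto simp: measure_pmf.prob_space_axioms)
    have "g t \<in> {- B..B}" for t
      using g[of t] by (simp add: abs_le_iff)
    then show "AE f in P. g (f i) \<in> {- B..B}" for i
      by simp
  qed (simp_all add: \<mu>_def)
  have "measure_pmf.prob P {f \<in> space (measure_pmf P). real T * \<epsilon> \<le> \<bar>(\<Sum>i<T. g (f i)) - \<mu>\<bar>}
      \<le> 2 * exp (- 2 * (real T * \<epsilon>)\<^sup>2 / (\<Sum>i<T. (B - - B)\<^sup>2))"
    using B T \<epsilon> by (intro Hoeffding_ineq_abs_ge) auto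
  also have "\<dots> = 2 * exp (- real T * \<epsilon>\<^sup>2 / (2 * B\<^sup>2))"
    using B T by (simp add: power2_eq_square field_simps)
  also have "{f \<in> space (measure_pmf P). real T * \<epsilon> \<le> \<bar>(\<Sum>i<T. g (f i)) - \<mu>\<bar>}
      = {f. \<epsilon> \<le> \<bar>(\<Sum>i<T. g (f i)) / T - measure_pmf.expectation M g\<bar>}"
  proof -
    have "real T * \<epsilon> \<le> \<bar>y - \<mu>\<bar> \<longleftrightarrow> \<epsilon> \<le> \<bar>y / T - measure_pmf.expectation M g\<bar>" for y
    proof -
      have "y / T - measure_pmf.expectation M g = (y - \<mu>) / T"
        using T by (simp add: \<mu>_eq field_simps)
      then show ?thesis
        using T by (simp add: abs_divide pos_le_divide_eq mult.commute)
    qed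
    then show ?thesis by auto
  qed
  finally show ?thesis unfolding P_def .
qed

lemma traces_pmf_eq_map_Pi_pmf:
  "traces_pmf p s T = map_pmf (\<lambda>f. map f (rev [0..<T])) (Pi_pmf {..<T} [] (\<lambda>_. trace_pmf p s))"
proof (induction T)
  case (Suc T)
  have "Pi_pmf {..<Suc T} [] (\<lambda>_. trace_pmf p s) =
        do {t \<leftarrow> trace_pmf p s; f \<leftarrow> Pi_pmf {..<T} [] (\<lambda>_. trace_pmf p s); return_pmf (f(T := t))}"
    unfolding lessThan_Suc by (rule Pi_pmf_insert') auto
  moreover have "map (f(T := t)) (rev [0..<T]) = map f (rev [0..<T])" for f :: "nat \<Rightarrow> bool list" and t
    by (auto intro: map_cong)
  ultimately show ?case
    unfolding traces_pmf.simps Suc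
    by (simp add: map_bind_pmf bind_map_pmf map_pmf_def[symmetric] pmf.map_comp o_def)
qed simp

lemma hoeffding_traces_pmf_mean:
  fixes g :: "bool list \<Rightarrow> real"
  assumes "\<And>t. \<bar>g t\<bar> \<le> B" "B > 0" "T > 0" "\<epsilon> > 0"
  shows "measure_pmf.prob (traces_pmf p s T)
           {ts. \<epsilon> \<le> \<bar>sum_list (map g ts) / length ts - measure_pmf.expectation (trace_pmf p s) g\<bar>}
         \<le> 2 * exp (- real T * \<epsilon>\<^sup>2 / (2 * B\<^sup>2))"
proof -
  have "sum_list (map g (map f (rev [0..<T]))) = (\<Sum>i<T. g (f i))" for f :: "nat \<Rightarrow> bool list"
    by (simp add: sum_list_rev rev_map[symmetric] atLeast0LessThan[symmetric] sum_set_upt_conv_sum_list_nat[symmetric])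
  then show ?thesis
    unfolding traces_pmf_eq_map_Pi_pmf measure_map_pmf
    using hoeffding_Pi_pmf_mean[OF assms, of "[]" "trace_pmf p s"] by (simp add: vimage_def)
qed

lemma powr_mult_log_eq_power:
  assumes "n > 0" "y > 0" and "real k = c * log 2 n"
  shows "n powr (c * log 2 y) = y ^ k"
proof -
  have "n powr (c * log 2 y) = exp (real k * ln y)"
    using assms by (simp add: powr_def log_def)
  also have "\<dots> = y powr real k"
    using assms(2) by (simp add: powr_def)
  also have "\<dots> = y ^ k"
    using assms(2) by (simp add: powr_realpow)
  finally show ?thesis .
qed

lemma alpha_c_eq:
  assumes "0 < p" "p < 1/2"
  shows "alpha_c c p = 1 + c * log 2 ((1 - p) / (1 - 2 * p))"
proof -
  define r where "r = p / (1 - p)"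
  have r: "0 < r" "r < 1" using assms by (auto simp: r_def field_simps)
  have "(c * bin_entropy (1 - r) + c * log 2 r) / (1 - r) = c * (log 2 r - log 2 (1 - r))"
    using r by (simp add: bin_entropy_def field_simps)
  moreover have "(1 - p) / p = 1 / r" "(1 - p) / (1 - 2 * p) = 1 / (1 - r)"
    using assms by (simp_all add: r_def field_simps)
  ultimately show ?thesis
    using r unfolding alpha_c_def r_def[symmetric] by (simp add: log_divide algebra_simps)
qed

lemma f_c_ge:
  assumes "0 < p" "p < 1/2" and n: "real n \<ge> 1" and k: "real k = c * log 2 (real n)"
  shows "2 * ((1 / (1 - 2 * p)) ^ k)\<^sup>2 \<le> f_c c p n"
proof -
  define A where "A = ((1 - p) / (1 - 2 * p)) ^ k"
  define D where "D = (1 - p) ^ k"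
  have A: "A \<ge> 1" unfolding A_def using assms by (intro one_le_power) (auto simp: field_simps)
  have D: "D > 0" unfolding D_def using assms by simp
  have "real n powr alpha_c c p = real n * A"
    using n assms unfolding alpha_c_eq[OF assms(1,2)] A_def
    by (simp add: powr_add powr_mult_log_eq_power[OF _ _ k])
  moreover have "real n powr (2 * c * log 2 (1 - p) - 1) = D\<^sup>2 / real n"
  proof -
    have "2 * c * log 2 (1 - p) = c * log 2 ((1 - p)\<^sup>2)"
      using assms by (simp add: log_nat_power)
    then have "real n powr (2 * c * log 2 (1 - p)) = ((1 - p)\<^sup>2) ^ k"
      using n assms by (simp only:) (rule powr_mult_log_eq_power[OF _ _ k], simp_all)
    then show ?thesis
      unfolding D_def using n by (simp add: powr_diff power_mult[symmetric] mult.commute)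
  qed
  ultimately have f_c: "f_c c p n = (1 + 2 * (real n * A))\<^sup>2 * real n / (2 * D\<^sup>2)"
    unfolding f_c_def using n by simp
  have "2 * ((1 / (1 - 2 * p)) ^ k)\<^sup>2 = (2 * A)\<^sup>2 / (2 * D\<^sup>2)"
    using assms unfolding A_def D_def by (simp add: power_divide power2_eq_square power_mult_distrib)
  also have "\<dots> \<le> (1 + 2 * (real n * A))\<^sup>2 * real n / (2 * D\<^sup>2)"
  proof (rule divide_right_mono)
    have "2 * A \<le> 1 + 2 * (real n * A)"
      using A n mult_right_mono[of 1 "real n" A] by linarith
    then have "(2 * A)\<^sup>2 \<le> (1 + 2 * (real n * A))\<^sup>2"
      using A by (intro power_mono) auto
    also have "\<dots> \<le> (1 + 2 * (real n * A))\<^sup>2 * real n"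
      using n by (simp add: mult_le_cancel_left1)
    finally show "(2 * A)\<^sup>2 \<le> (1 + 2 * (real n * A))\<^sup>2 * real n" .
  qed (use D in simp)
  finally show ?thesis
    unfolding f_c .
qed

lemma prob_ge_of_prob_compl_le:
  assumes "measure_pmf.prob M {\<omega>. \<not> P \<omega>} \<le> \<eta>"
  shows "1 - \<eta> \<le> measure_pmf.prob M {\<omega>. P \<omega>}"
proof -
  have "measure_pmf.prob M {\<omega>. P \<omega>} = 1 - measure_pmf.prob M {\<omega>. \<not> P \<omega>}"
    using measure_pmf.prob_compl[of "{\<omega>. \<not> P \<omega>}" M] by (simp add: Compl_eq_Diff_UNIV[symmetric] Collect_neg_eq[symmetric])
  then show ?thesis using assms by simp
qed

lemma prob_Ball_ge:
  fixes \<eta> :: real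
  assumes "finite S" and "\<And>a. a \<in> S \<Longrightarrow> measure_pmf.prob M {\<omega>. \<not> P a \<omega>} \<le> \<eta>"
  shows "1 - real (card S) * \<eta> \<le> measure_pmf.prob M {\<omega>. \<forall>a\<in>S. P a \<omega>}"
proof (rule prob_ge_of_prob_compl_le)
  have "measure_pmf.prob M {\<omega>. \<not> (\<forall>a\<in>S. P a \<omega>)} = measure_pmf.prob M (\<Union>a\<in>S. {\<omega>. \<not> P a \<omega>})"
    by (rule arg_cong[where f = "measure_pmf.prob M"]) auto
  also have "\<dots> \<le> (\<Sum>a\<in>S. measure_pmf.prob M {\<omega>. \<not> P a \<omega>})"
    by (rule measure_pmf.finite_measure_subadditive_finite) (use assms(1) in auto)
  also have "\<dots> \<le> real (card S) * \<eta>"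
    using sum_bounded_above[of S "\<lambda>a. measure_pmf.prob M {\<omega>. \<not> P a \<omega>}" \<eta>] assms(2) by simp
  finally show "measure_pmf.prob M {\<omega>. \<not> (\<forall>a\<in>S. P a \<omega>)} \<le> real (card S) * \<eta>" .
qed

lemma hoeffding_bound_le_inverse:
  assumes "B > 0" "\<epsilon> > 0" "2 * B\<^sup>2 \<le> F" "M \<ge> 1"
    and T: "ln M * \<epsilon> powr (-2) * F \<le> real T"
  shows "exp (- real T * \<epsilon>\<^sup>2 / (2 * B\<^sup>2)) \<le> 1 / M"
proof -
  have "ln M * (2 * B\<^sup>2) \<le> ln M * F"
    using assms by (intro mult_left_mono) simp_all
  also have "ln M * F = (ln M * \<epsilon> powr (-2) * F) * \<epsilon>\<^sup>2"
    using assms by (simp add: powr_minus powr_realpow field_simps)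
  also have "\<dots> \<le> real T * \<epsilon>\<^sup>2"
    using T by (rule mult_right_mono) simp
  finally have "ln M \<le> real T * \<epsilon>\<^sup>2 / (2 * B\<^sup>2)"
    using assms by (simp add: field_simps)
  then have "exp (- real T * \<epsilon>\<^sup>2 / (2 * B\<^sup>2)) \<le> exp (- ln M)"
    by simp
  then show ?thesis
    using assms by (simp add: exp_minus inverse_eq_divide)
qed

lemma sample_size_pos:
  assumes "M > 1" "\<epsilon> > 0" "F > 0" "ln M * \<epsilon> powr (-2) * F \<le> real T"
  shows "T > 0"
proof -
  have "0 < ln M * \<epsilon> powr (-2) * F" using assms by simp
  then show ?thesis using assms(4) by linarith
qed

definition trace_statistic :: "real \<Rightarrow> bool list \<Rightarrow> nat \<Rightarrow> bool list \<Rightarrow> real" where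
  "trace_statistic p x i t = anchored_weight (- p / (1 - p)) x (drop (i - 1) t) / (1 - p) ^ length x"

definition kmer_estimator :: "real \<Rightarrow> bool list \<Rightarrow> nat \<Rightarrow> bool list list \<Rightarrow> real" where
  "kmer_estimator p x i ts = sum_list (map (trace_statistic p x i) ts) / length ts"

lemma expectation_trace_statistic:
  assumes "0 \<le> p" "p < 1" "x \<noteq> []" "1 \<le> i"
  shows "measure_pmf.expectation (trace_pmf p s) (trace_statistic p x i) = kmer_density p s x i"
proof -
  have "p + (1 - p) * (- p / (1 - p)) = 0" using assms by simp
  then show ?thesis
    using assms expectation_anchored_weight[of p "- p / (1 - p)" x s "i - 1"]
    unfolding trace_statistic_def by (simp add: kmer_density_eq_kmer_density0)
qed

lemma abs_trace_statistic_le: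
  assumes "0 \<le> p" "p < 1/2"
  shows "\<bar>trace_statistic p x i t\<bar> \<le> (1 / (1 - 2 * p)) ^ length x"
proof -
  define r where "r = p / (1 - p)"
  have r: "\<bar>- p / (1 - p)\<bar> = r" "r < 1" "1 - r = (1 - 2 * p) / (1 - p)"
    using assms by (simp_all add: r_def field_simps)
  have "\<bar>trace_statistic p x i t\<bar> = \<bar>anchored_weight (- p / (1 - p)) x (drop (i - 1) t)\<bar> / (1 - p) ^ length x"
    using assms by (simp add: trace_statistic_def abs_divide)
  also have "\<dots> \<le> (1 / (1 - r)) ^ length x / (1 - p) ^ length x"
    using abs_anchored_weight_le[of "- p / (1 - p)"] r assms by (intro divide_right_mono) simp_all
  also have "\<dots> = (1 / (1 - 2 * p)) ^ length x"
    using assms by (simp add: r(3) power_divide)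
  finally show ?thesis .
qed

lemma kmer_estimator_tail:
  assumes "0 \<le> p" "p < 1/2" "x \<noteq> []" "1 \<le> i" "T > 0" "\<epsilon> > 0"
  shows "measure_pmf.prob (traces_pmf p s T)
           {ts. \<epsilon> \<le> \<bar>kmer_estimator p x i ts - kmer_density p s x i\<bar>}
         \<le> 2 * exp (- real T * \<epsilon>\<^sup>2 / (2 * ((1 / (1 - 2 * p)) ^ length x)\<^sup>2))"
proof -
  have "measure_pmf.expectation (trace_pmf p s) (trace_statistic p x i) = kmer_density p s x i"
    using assms by (intro expectation_trace_statistic) simp_all
  moreover have "0 < (1 / (1 - 2 * p)) ^ length x"
    using assms by simp
  ultimately show ?thesis
    unfolding kmer_estimator_def
    using hoeffding_traces_pmf_mean[of "trace_statistic p x i" "(1 / (1 - 2 * p)) ^ length x" T \<epsilon> p s]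
      abs_trace_statistic_le[OF assms(1,2)] assms(5,6) by simp
qed

lemma kmer_estimator_prob_close:
  assumes p: "0 \<le> p" "p < 1/2" and "x \<noteq> []" "1 \<le> i"
    and \<epsilon>: "\<epsilon> > 0" and \<delta>: "0 < \<delta>" "\<delta> < 1"
    and F: "2 * ((1 / (1 - 2 * p)) ^ length x)\<^sup>2 \<le> F"
    and T: "ln (2 / \<delta>) * \<epsilon> powr (-2) * F \<le> real T"
  shows "1 - \<delta> \<le> measure_pmf.prob (traces_pmf p s T)
           {ts. \<bar>kmer_estimator p x i ts - kmer_density p s x i\<bar> < \<epsilon>}"
proof (rule prob_ge_of_prob_compl_le)
  define B where "B = (1 / (1 - 2 * p)) ^ length x"
  have B: "B > 0" using p by (simp add: B_def)
  then have "F > 0"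
    using F[folded B_def] by (metis order_less_le_trans zero_less_numeral zero_less_power mult_pos_pos)
  then have "T > 0"
    using \<delta> by (intro sample_size_pos[OF _ \<epsilon> _ T]) simp_all
  then have "measure_pmf.prob (traces_pmf p s T)
               {ts. \<not> \<bar>kmer_estimator p x i ts - kmer_density p s x i\<bar> < \<epsilon>}
             \<le> 2 * exp (- real T * \<epsilon>\<^sup>2 / (2 * B\<^sup>2))"
    using kmer_estimator_tail[OF p assms(3,4) _ \<epsilon>] by (simp add: B_def not_less)
  also have "\<dots> \<le> 2 * (1 / (2 / \<delta>))"
    using hoeffding_bound_le_inverse[OF B \<epsilon> F[folded B_def] _ T] \<delta> by simp
  finally show "measure_pmf.prob (traces_pmf p s T)
               {ts. \<not> \<bar>kmer_estimator p x i ts - kmer_density p s x i\<bar> < \<epsilon>} \<le> \<delta>"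
    by simp
qed

lemma kmer_estimator_prob_all_close:
  assumes p: "0 \<le> p" "p < 1/2" and k: "k \<ge> 1" and n: "n \<ge> 1"
    and \<epsilon>: "\<epsilon> > 0" and \<delta>: "0 < \<delta>" "\<delta> < 1"
    and F: "2 * ((1 / (1 - 2 * p)) ^ k)\<^sup>2 \<le> F"
    and N: "2 ^ k * real n \<le> N"
    and T: "ln (2 * N / \<delta>) * \<epsilon> powr (-2) * F \<le> real T"
  shows "1 - \<delta> \<le> measure_pmf.prob (traces_pmf p s T)
           {ts. \<forall>x i. length x = k \<longrightarrow> 1 \<le> i \<longrightarrow> i + k \<le> n + 1 \<longrightarrow>
                  \<bar>kmer_estimator p x i ts - kmer_density p s x i\<bar> < \<epsilon>}"
proof -
  define S where "S = {x :: bool list. length x = k} \<times> {1..n + 1 - k}"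
  have "finite S"
    unfolding S_def using finite_lists_length_eq[of "UNIV :: bool set" k] by simp
  define B where "B = (1 / (1 - 2 * p)) ^ k"
  have B: "B > 0" using p by (simp add: B_def)
  then have "F > 0"
    using F[folded B_def] by (metis order_less_le_trans zero_less_numeral zero_less_power mult_pos_pos)
  have "2 \<le> N"
    using N n k order_trans[OF mult_mono[of 2 "2 ^ k" 1 "real n"]] by (simp add: self_le_power)
  then have M: "2 * N / \<delta> > 1"
    using \<delta> by (simp add: field_simps)
  have "T > 0"
    by (rule sample_size_pos[OF M \<epsilon> \<open>F > 0\<close> T])
  have "measure_pmf.prob (traces_pmf p s T)
          {ts. \<not> \<bar>kmer_estimator p x i ts - kmer_density p s x i\<bar> < \<epsilon>} \<le> \<delta> / N"
    if "(x, i) \<in> S" for x i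
  proof -
    have x: "length x = k" "x \<noteq> []" and "1 \<le> i"
      using that k by (auto simp: S_def)
    have "measure_pmf.prob (traces_pmf p s T)
            {ts. \<not> \<bar>kmer_estimator p x i ts - kmer_density p s x i\<bar> < \<epsilon>}
          \<le> 2 * exp (- real T * \<epsilon>\<^sup>2 / (2 * B\<^sup>2))"
      using kmer_estimator_tail[OF p x(2) \<open>1 \<le> i\<close> \<open>T > 0\<close> \<epsilon>, of s]
      by (simp add: B_def x(1) not_less)
    also have "\<dots> \<le> 2 * (1 / (2 * N / \<delta>))"
      using hoeffding_bound_le_inverse[OF B \<epsilon> F[folded B_def] _ T] M by simp
    finally show ?thesis by simp
  qed
  then have "1 - real (card S) * (\<delta> / N) \<le> measure_pmf.prob (traces_pmf p s T)
      {ts. \<forall>(x, i)\<in>S. \<bar>kmer_estimator p x i ts - kmer_density p s x i\<bar> < \<epsilon>}"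
    by (intro prob_Ball_ge[OF \<open>finite S\<close>]) (simp add: split_paired_all)
  moreover have "real (card S) * (\<delta> / N) \<le> \<delta>"
  proof -
    have "card {x :: bool list. length x = k} = 2 ^ k"
      using card_lists_length_eq[of "UNIV :: bool set" k] by simp
    then have "real (card S) = 2 ^ k * real (n + 1 - k)"
      by (simp add: S_def card_cartesian_product)
    also have "\<dots> \<le> 2 ^ k * real n"
      using k by (intro mult_left_mono) simp_all
    finally have "real (card S) * (\<delta> / N) \<le> N * (\<delta> / N)"
      using N \<delta> by (intro mult_right_mono) simp_all
    then show ?thesis
      using \<open>2 \<le> N\<close> by simp
  qed
  moreover have "{ts. \<forall>(x, i)\<in>S. \<bar>kmer_estimator p x i ts - kmer_density p s x i\<bar> < \<epsilon>}
      = {ts. \<forall>x i. length x = k \<longrightarrow> 1 \<le> i \<longrightarrow> i + k \<le> n + 1 \<longrightarrow>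
                  \<bar>kmer_estimator p x i ts - kmer_density p s x i\<bar> < \<epsilon>}"
    using k by (auto simp: S_def)
  ultimately show ?thesis
    by simp
qed

theorem theorem1:
  fixes p c :: real and n k :: nat
  assumes hp0: "0 < p" and hp1: "p < 1/2"
    and hc: "c > 0"
    and hk: "real k = c * log 2 (real n)" and hk2: "k \<ge> 2"
  shows
   "(\<forall>x i. length x = k \<longrightarrow> 1 \<le> i \<longrightarrow> i + k \<le> n + 1 \<longrightarrow>
      (\<exists>est :: bool list list \<Rightarrow> real.
         \<forall>s. length s = n \<longrightarrow>
         (\<forall>(T::nat) (\<epsilon>::real) (\<delta>::real). \<epsilon> > 0 \<longrightarrow> 0 < \<delta> \<longrightarrow> \<delta> < 1 \<longrightarrow>
            real T \<ge> ln (2 / \<delta>) * \<epsilon> powr (-2) * f_c c p n \<longrightarrow>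
            measure_pmf.prob (traces_pmf p s T)
              {ts. \<bar>est ts - kmer_density p s x i\<bar> < \<epsilon>} \<ge> 1 - \<delta>)))
    \<and>
    (\<exists>est :: bool list list \<Rightarrow> bool list \<Rightarrow> nat \<Rightarrow> real.
         \<forall>s. length s = n \<longrightarrow>
         (\<forall>(T::nat) (\<epsilon>::real) (\<delta>::real). \<epsilon> > 0 \<longrightarrow> 0 < \<delta> \<longrightarrow> \<delta> < 1 \<longrightarrow>
            real T \<ge> ln (2 * real n powr (1 + c) / \<delta>) * \<epsilon> powr (-2) * f_c c p n \<longrightarrow>
            measure_pmf.prob (traces_pmf p s T)
              {ts. \<forall>x i. length x = k \<longrightarrow> 1 \<le> i \<longrightarrow> i + k \<le> n + 1 \<longrightarrow>
                    \<bar>est ts x i - kmer_density p s x i\<bar> < \<epsilon>} \<ge> 1 - \<delta>))"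
proof -
  have p: "0 \<le> p" "p < 1/2" using hp0 hp1 by simp_all
  have n: "real n \<ge> 1"
  proof (rule ccontr)
    assume "\<not> real n \<ge> 1"
    then have "log 2 (real n) \<le> 0" by (cases "n = 0") (simp_all add: log_def)
    then have "c * log 2 (real n) \<le> 0" using hc by (simp add: mult_nonneg_nonpos)
    then show False using hk hk2 by simp
  qed
  have F: "2 * ((1 / (1 - 2 * p)) ^ k)\<^sup>2 \<le> f_c c p n"
    by (rule f_c_ge[OF hp0 hp1 n hk])
  have N: "2 ^ k * real n \<le> real n powr (1 + c)"
    using powr_mult_log_eq_power[of "real n" 2 k c] n hk by (simp add: powr_add)
  show ?thesis
    apply (intro conjI allI impI)
    subgoal for x i
      using hk2 F
      by (intro exI[of _ "kmer_estimator p x i"] allI impI kmer_estimator_prob_close[OF p]) auto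
    using hk2 n F N
    by (intro exI[of _ "\<lambda>ts x i. kmer_estimator p x i ts"] allI impI kmer_estimator_prob_all_close[OF p])
       auto
qed

end
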